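(* Let $n,k,c,d$ be integers with $k\leqslant n<2k-3$, $d<c<k$ and $c+d=n$. Then there exists $M$ such that for every integer $m\geqslant M$ the following holds: every intersecting family $\mathcal{F}\subseteq\{F\in\binom{[m]}{k}\mid |F\cap[n]|=c \text{ or } |F\cap[n]|=d\}$ of maximum cardinality has the form \[ \left\{A\cup B\cup\{t\}\ \middle|\ A\in\binom{[n]\setminus\{t\}}{c-1},\ B\in\binom{[n+1,m]}{k-c}\right\}\cup\left\{A\cup B\cup\{t\}\ \middle|\ A\in\binom{[n]\setminus\{t\}}{d-1},\ B\in\binom{[n+1,m]}{k-d}\right\} \] for some $t\in[n]$, and hence $|\mathcal{F}|=\binom{n-1}{c-1}\binom{m-n}{k-c}+\binom{n-1}{d-1}\binom{m-n}{k-d}$.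
   Context: For positive integers $a\leqslant b$, $[a,b]=\{a,a+1,\dots,b\}$ and $[a]=[1,a]$; $\binom{X}{k}$ denotes the family of all $k$-subsets of a set $X$. A family of sets is intersecting if no two of its members are disjoint. *)

theory Defs
  imports Main
begin

definition ksubsets :: "'a set \<Rightarrow> nat \<Rightarrow> 'a set set" where
  "ksubsets X k = {A. A \<subseteq> X \<and> card A = k}"

definition intersecting :: "'a set set \<Rightarrow> bool" where
  "intersecting F \<longleftrightarrow> (\<forall>A\<in>F. \<forall>B\<in>F. A \<inter> B \<noteq> {})"

definition admissible :: "nat \<Rightarrow> nat \<Rightarrow> nat \<Rightarrow> nat \<Rightarrow> nat \<Rightarrow> nat set set" where
  "admissible m n k c d =
     {F \<in> ksubsets {1..m} k. card (F \<inter> {1..n}) = c \<or> card (F \<inter> {1..n}) = d}"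

definition max_intersecting :: "nat \<Rightarrow> nat \<Rightarrow> nat \<Rightarrow> nat \<Rightarrow> nat \<Rightarrow> nat set set \<Rightarrow> bool" where
  "max_intersecting m n k c d \<F> \<longleftrightarrow>
     \<F> \<subseteq> admissible m n k c d \<and> intersecting \<F> \<and>
     (\<forall>\<G>. \<G> \<subseteq> admissible m n k c d \<and> intersecting \<G> \<longrightarrow> card \<G> \<le> card \<F>)"

end

theory Submission
  imports Defs "HOL-Combinatorics.Multiset_Permutations"
begin

text \<open>Sort the members of a maximum family \<open>\<F>\<close> by their trace \<open>G \<inter> [n]\<close>. If some member
  \<open>G'\<close> misses a \<open>d\<close>-set \<open>D\<close>, every member with trace \<open>D\<close> has to meet \<open>G'\<close> inside
  \<open>[n+1, m]\<close>, so there are only \<open>O(m ^ (k - d - 1))\<close> of them. Hence the heavily used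
  \<open>d\<close>-traces form an intersecting family of \<open>d\<close>-subsets of \<open>[n]\<close>, and comparing \<open>\<F>\<close> with
  a star shows that for large \<open>m\<close> there are at least \<open>(n - 1 choose (d - 1))\<close> of them. As
  \<open>n > 2d\<close>, the extremal case of the Erd\H{o}s--Ko--Rado theorem (proved with Katona's cycle
  method) makes them contain all \<open>d\<close>-sets through some point \<open>t\<close>. Since \<open>c + d = n\<close>, a member
  avoiding \<open>t\<close> would be disjoint from one of these heavy traces, so every member contains \<open>t\<close>,
  and maximality turns \<open>\<F>\<close> into the full star at \<open>t\<close>.\<close>

lemma finite_ksubsets: "finite S \<Longrightarrow> finite (ksubsets S j)"
  unfolding ksubsets_def by simp

lemma card_Collect_eq_sum_of_bool:
  "finite S \<Longrightarrow> card {x \<in> S. P x} = (\<Sum>x\<in>S. of_bool (P x))"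
  by (simp add: Int_def)

lemma card_Collect_less_eq_sum_of_bool:
  "card {i. i < (n::nat) \<and> P i} = (\<Sum>i<n. of_bool (P i))"
  using card_Collect_eq_sum_of_bool[of "{..<n}" P] by simp

lemma card_ksubsets: "finite S \<Longrightarrow> card (ksubsets S j) = card S choose j"
  unfolding ksubsets_def by (rule n_subsets)

lemma card_image_ksubsets_le: "finite S \<Longrightarrow> card (f ` ksubsets S j) \<le> card S choose j"
  using card_image_le[OF finite_ksubsets] card_ksubsets by metis

lemma card_ksubsets_containing_le:
  assumes "finite Y" "y \<in> Y"
  shows "card {B \<in> ksubsets Y j. y \<in> B} \<le> card Y - 1 choose (j - 1)"
proof -
  have "{B \<in> ksubsets Y j. y \<in> B} \<subseteq> insert y ` ksubsets (Y - {y}) (j - 1)"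
  proof
    fix B assume B: "B \<in> {B \<in> ksubsets Y j. y \<in> B}"
    then have "finite B" using assms(1) by (auto simp: ksubsets_def intro: finite_subset)
    then have "B - {y} \<in> ksubsets (Y - {y}) (j - 1)" using B by (auto simp: ksubsets_def)
    moreover have "B = insert y (B - {y})" using B by auto
    ultimately show "B \<in> insert y ` ksubsets (Y - {y}) (j - 1)" by blast
  qed
  then have "card {B \<in> ksubsets Y j. y \<in> B} \<le> card (insert y ` ksubsets (Y - {y}) (j - 1))"
    by (intro card_mono finite_imageI finite_ksubsets) (use assms in auto)
  also have "\<dots> \<le> card (ksubsets (Y - {y}) (j - 1))"
    by (intro card_image_le finite_ksubsets) (use assms in auto)
  also have "\<dots> = card Y - 1 choose (j - 1)" using assms by (simp add: card_ksubsets)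
  finally show ?thesis .
qed

lemma card_UN_le_mult:
  assumes "finite S" "\<And>x. x \<in> S \<Longrightarrow> card (f x) \<le> b"
  shows "card (\<Union>x\<in>S. f x) \<le> card S * b"
proof -
  have "card (\<Union>x\<in>S. f x) \<le> (\<Sum>x\<in>S. card (f x))" by (rule card_UN_le[OF assms(1)])
  also have "\<dots> \<le> card S * b" using sum_bounded_above[of S "\<lambda>x. card (f x)" b] assms(2) by simp
  finally show ?thesis .
qed

section \<open>Katona's cycle method\<close>

definition arc :: "'a list \<Rightarrow> nat \<Rightarrow> nat \<Rightarrow> 'a set" where
  "arc xs d i = set (take d (rotate i xs))"

lemma arc_conv_nth:
  assumes "d \<le> length xs"
  shows "arc xs d i = {xs ! ((i + j) mod length xs) | j. j < d}"
  using assms by (force simp: arc_def set_conv_nth nth_rotate)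

lemma arc_rotate: "arc (rotate r xs) d i = arc xs d (r + i)"
  by (simp add: arc_def rotate_rotate add.commute)

lemma arc_mod: "arc xs d (i mod length xs) = arc xs d i"
  by (simp add: arc_def rotate_conv_mod[symmetric])

lemma mod_add_left_cancel_nat:
  assumes "(a + x) mod n = (a + y) mod n" shows "x mod (n::nat) = y mod n"
proof -
  have "(int a + int x) mod int n = (int a + int y) mod int n"
    using assms by (metis of_nat_add of_nat_mod)
  then have "(int a + int x - int a) mod int n = (int a + int y - int a) mod int n"
    by (rule mod_diff_cong) (rule refl)
  then show ?thesis by (metis add_diff_cancel_left' of_nat_eq_iff of_nat_mod)
qed

lemma mod_eq_cases:
  assumes "x mod n = y mod n" "x < n" "y < 2 * n" shows "y = x \<or> y = x + (n::nat)"
proof -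
  have "y mod n = x" "y div n < 2" "y = y div n * n + y mod n"
    using assms by (auto simp: div_less_iff_less_mult mult.commute)
  then show ?thesis by (cases "y div n") (auto simp: less_Suc_eq)
qed

lemma card_rotated_arcs:
  assumes "length xs = n"
  shows "card {i. i < n \<and> arc (rotate r xs) d i \<in> A} = card {i. i < n \<and> arc xs d i \<in> A}"
proof -
  let ?shift = "\<lambda>i. (r + i) mod n"
  let ?J = "{i. i < n \<and> arc (rotate r xs) d i \<in> A}"
  have inj: "inj_on ?shift {..<n}"
    by (rule inj_onI) (metis lessThan_iff mod_add_left_cancel_nat mod_less)
  have onto: "?shift ` {..<n} = {..<n}"
  proof (cases "n = 0")
    case False
    then show ?thesis by (intro endo_inj_surj inj) auto
  qed simp
  have arc_shift: "arc (rotate r xs) d i = arc xs d (?shift i)" for i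
    using assms arc_mod[of xs d "r + i"] by (simp add: arc_rotate)
  have img: "?shift ` ?J = {i. i < n \<and> arc xs d i \<in> A}"
  proof (intro equalityI subsetI)
    fix i assume i: "i \<in> {i. i < n \<and> arc xs d i \<in> A}"
    then have "i \<in> ?shift ` {..<n}" using onto by simp
    then obtain j where "j < n" "i = ?shift j" by auto
    then show "i \<in> ?shift ` ?J" using i arc_shift by auto
  next
    fix i assume "i \<in> ?shift ` ?J"
    then show "i \<in> {i. i < n \<and> arc xs d i \<in> A}" using arc_shift by auto
  qed
  have "inj_on ?shift ?J" using inj by (rule inj_on_subset) auto
  from card_image[OF this] img show ?thesis by simp
qed

lemma arc_meet_offsets:
  assumes "distinct xs" "length xs = n" "a + d \<le> n" "b < n" "arc xs d a \<inter> arc xs d b \<noteq> {}"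
  shows "\<exists>j<d. \<exists>j'<d. b + j' = a + j \<or> b + j' = a + j + n"
proof -
  obtain j j' where j: "j < d" "j' < d" "xs ! ((a + j) mod n) = xs ! ((b + j') mod n)"
    using assms(2-5) by (auto simp: arc_conv_nth)
  have "0 < n" using j(1) assms(3) by linarith
  then have "(a + j) mod n = (b + j') mod n"
    using j(3) assms(1,2) nth_eq_iff_index_eq by (metis mod_less_divisor)
  then have "b + j' = a + j \<or> b + j' = a + j + n"
    using j assms(3,4) by (intro mod_eq_cases) auto
  then show ?thesis using j by blast
qed

text \<open>Katona's cycle argument: if the arc starting at 0 lies in an intersecting family, every other
  arc of the family starts at some \<open>t\<close> or at \<open>t + (n - d)\<close> with \<open>0 < t < d\<close>, and these two
  arcs are disjoint; so folding \<open>t + (n - d)\<close> onto \<open>t\<close> is injective on the starting points.\<close>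

lemma card_arcs_in_intersecting:
  assumes xs: "distinct xs" "length xs = n" and dn: "2 * d \<le> n"
    and A: "intersecting A" "arc xs d 0 \<in> A"
  shows "card {i. i < n \<and> arc xs d i \<in> A}
           \<le> Suc (card {t \<in> {1..<d}. arc xs d t \<in> A \<or> arc xs d (t + (n - d)) \<in> A})"
proof -
  define I where "I = {i. i < n \<and> arc xs d i \<in> A}"
  define T where "T = {t \<in> {1..<d}. arc xs d t \<in> A \<or> arc xs d (t + (n - d)) \<in> A}"
  define fold where "fold i = (if i < d then i else i - (n - d))" for i
  have meet: "arc xs d a \<inter> arc xs d b \<noteq> {}" if "arc xs d a \<in> A" "arc xs d b \<in> A" for a b
    using A(1) that unfolding intersecting_def by blast
  have near: "i < d \<or> n - d < i" if "i \<in> I" for i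
    using arc_meet_offsets[OF xs, of 0 d i] meet[OF A(2)] that dn by (auto simp: I_def)
  have apart: "t + (n - d) \<notin> I" if "1 \<le> t" "t < d" "t \<in> I" for t
  proof
    assume "t + (n - d) \<in> I"
    then have "arc xs d t \<inter> arc xs d (t + (n - d)) \<noteq> {}"
      using meet that(3) by (auto simp: I_def)
    moreover have "t + d \<le> n" "t + (n - d) < n" using that dn by auto
    ultimately obtain j j' where
      "j < d" "j' < d" "t + (n - d) + j' = t + j \<or> t + (n - d) + j' = t + j + n"
      using arc_meet_offsets[OF xs] by blast
    then show False using dn by arith
  qed
  have inj: "inj_on fold (I - {0})"
  proof (rule inj_onI)
    fix i i' assume "i \<in> I - {0}" "i' \<in> I - {0}" "fold i = fold i'"
    then show "i = i'"
      using near[of i] near[of i'] apart[of i] apart[of i'] dn unfolding fold_def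
      by (cases "i < d"; cases "i' < d") (auto simp: I_def)
  qed
  have into: "fold ` (I - {0}) \<subseteq> T"
  proof
    fix u assume "u \<in> fold ` (I - {0})"
    then obtain i where i: "i \<in> I" "i \<noteq> 0" "u = fold i" by blast
    show "u \<in> T"
    proof (cases "i < d")
      case True
      then show ?thesis using i by (auto simp: T_def I_def fold_def)
    next
      case False
      then have "n - d < i" "i < n" using near[OF i(1)] i(1) by (auto simp: I_def)
      then have "i = u + (n - d)" "1 \<le> u" "u < d" using False i(3) by (auto simp: fold_def)
      then show ?thesis using i by (auto simp: T_def I_def)
    qed
  qed
  have "card (I - {0}) \<le> card T"
    using card_inj_on_le[OF inj into] by (simp add: T_def)
  moreover have "card I \<le> Suc (card (I - {0}))"
    by (cases "0 \<in> I") (simp_all add: card_Diff_singleton_if)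
  ultimately show ?thesis unfolding I_def T_def by linarith
qed

lemma card_arcs_in_intersecting_le:
  assumes xs: "distinct xs" "length xs = n" and d: "1 \<le> d" "2 * d \<le> n" and A: "intersecting A"
  shows "card {i. i < n \<and> arc xs d i \<in> A} \<le> d"
proof (cases "\<exists>i0. arc xs d i0 \<in> A")
  case True
  then obtain i0 where i0: "arc (rotate i0 xs) d 0 \<in> A" by (auto simp: arc_rotate)
  have "distinct (rotate i0 xs)" "length (rotate i0 xs) = n" using xs by simp_all
  from card_arcs_in_intersecting[OF this d(2) A i0]
  have "card {i. i < n \<and> arc (rotate i0 xs) d i \<in> A}
      \<le> Suc (card {t \<in> {1..<d}. arc (rotate i0 xs) d t \<in> A \<or> arc (rotate i0 xs) d (t + (n - d)) \<in> A})" .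
  also have "\<dots> \<le> Suc (card {1..<d})" by (intro Suc_le_mono[THEN iffD2] card_mono) auto
  also have "\<dots> = d" using d(1) by simp
  finally show ?thesis unfolding card_rotated_arcs[OF xs(2)] .
next
  case False
  then have "{i. i < n \<and> arc xs d i \<in> A} = {}" by blast
  then show ?thesis by (metis card.empty le0)
qed

lemma card_arcs_in_intersecting_less:
  assumes "distinct xs" "length xs = n" "2 \<le> d" "2 * d \<le> n" "intersecting A"
    and "arc xs d 0 \<in> A" "arc xs d 1 \<notin> A" "arc xs d (1 + (n - d)) \<notin> A"
  shows "card {i. i < n \<and> arc xs d i \<in> A} < d"
proof -
  have "{t \<in> {1..<d}. arc xs d t \<in> A \<or> arc xs d (t + (n - d)) \<in> A} \<subseteq> {2..<d}"
  proof
    fix t assume t: "t \<in> {t \<in> {1..<d}. arc xs d t \<in> A \<or> arc xs d (t + (n - d)) \<in> A}"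
    have "t \<noteq> 1"
    proof
      assume "t = 1"
      with t assms(7,8) show False by simp
    qed
    then show "t \<in> {2..<d}" using t by auto
  qed
  from card_mono[OF finite_atLeastLessThan this]
  have "card {t \<in> {1..<d}. arc xs d t \<in> A \<or> arc xs d (t + (n - d)) \<in> A} \<le> d - 2"
    by simp
  then show ?thesis using card_arcs_in_intersecting[OF assms(1,2,4,5,6)] assms(3) by linarith
qed

lemma card_permutations_with_prefix:
  assumes "finite X" "F \<subseteq> X" "card F = d"
  shows "card {xs \<in> permutations_of_set X. set (take d xs) = F} = fact d * fact (card X - d)"
proof -
  let ?glue = "\<lambda>(ys, zs). ys @ zs"
  let ?D = "permutations_of_set F \<times> permutations_of_set (X - F)"
  have finF: "finite F" using assms(1,2) finite_subset by blast
  have img: "?glue ` ?D = {xs \<in> permutations_of_set X. set (take d xs) = F}"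
  proof (intro equalityI subsetI)
    fix xs assume "xs \<in> ?glue ` ?D"
    then obtain ys zs where "set ys = F" "distinct ys" "set zs = X - F" "distinct zs" "xs = ys @ zs"
      by (auto simp: permutations_of_set_def)
    moreover from this have "length ys = d" using assms(3) distinct_card by metis
    ultimately show "xs \<in> {xs \<in> permutations_of_set X. set (take d xs) = F}"
      using assms(2) by (auto simp: permutations_of_set_def)
  next
    fix xs assume "xs \<in> {xs \<in> permutations_of_set X. set (take d xs) = F}"
    then have xs: "distinct xs" "set xs = X" "set (take d xs) = F"
      by (auto simp: permutations_of_set_def)
    have "set (take d xs) \<inter> set (drop d xs) = {}" "set (take d xs) \<union> set (drop d xs) = X"
      using xs(1,2) by (metis append_take_drop_id distinct_append, metis append_take_drop_id set_append)
    then have "set (drop d xs) = X - F" using xs(3) by blast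
    then have "(take d xs, drop d xs) \<in> ?D" using xs by (simp add: permutations_of_set_def)
    then show "xs \<in> ?glue ` ?D" by (intro image_eqI[of _ _ "(take d xs, drop d xs)"]) auto
  qed
  have inj: "inj_on ?glue ?D"
  proof (rule inj_onI)
    fix p q assume pq: "p \<in> ?D" "q \<in> ?D" "?glue p = ?glue q"
    obtain ys zs ys' zs' where p: "p = (ys, zs)" and q: "q = (ys', zs')" by (cases p, cases q)
    have "length ys = card F" "length ys' = card F"
      using pq p q by (auto simp: length_finite_permutations_of_set)
    then show "p = q" using pq(3) p q by simp
  qed
  have "card {xs \<in> permutations_of_set X. set (take d xs) = F} = card ?D"
    using card_image[OF inj] img by simp
  also have "\<dots> = fact d * fact (card X - d)"
    using assms finF by (simp add: card_cartesian_product card_Diff_subset)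
  finally show ?thesis .
qed

lemma bij_betw_rotate_permutations_of_set:
  "bij_betw (rotate r) (permutations_of_set X) (permutations_of_set X)"
proof -
  have "inj (rotate r :: 'a list \<Rightarrow> _)"
    unfolding rotate_def by (rule inj_fn) (rule inj_rotate1)
  then have "inj_on (rotate r) (permutations_of_set X)" by (rule inj_on_subset) simp
  moreover have "rotate r ` permutations_of_set X \<subseteq> permutations_of_set X"
    by (auto simp: permutations_of_set_def)
  ultimately show ?thesis
    by (simp add: bij_betw_def endo_inj_surj finite_permutations_of_set)
qed

lemma card_permutations_arc_in:
  "card {xs \<in> permutations_of_set X. arc xs d i \<in> A}
     = card {xs \<in> permutations_of_set X. arc xs d 0 \<in> A}"
proof -
  let ?P = "permutations_of_set X"
  have bij: "bij_betw (rotate i) ?P ?P" by (rule bij_betw_rotate_permutations_of_set)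
  have first: "arc (rotate i xs) d 0 = arc xs d i" for xs :: "'a list"
    by (simp add: arc_rotate)
  have img: "rotate i ` {xs \<in> ?P. arc xs d i \<in> A} = {xs \<in> ?P. arc xs d 0 \<in> A}"
  proof (intro equalityI subsetI)
    fix ys assume "ys \<in> {xs \<in> ?P. arc xs d 0 \<in> A}"
    moreover from this obtain xs where "xs \<in> ?P" "ys = rotate i xs"
      using bij by (auto simp: bij_betw_def)
    ultimately show "ys \<in> rotate i ` {xs \<in> ?P. arc xs d i \<in> A}" by (auto simp: first)
  qed (use bij in \<open>auto simp: bij_betw_def first\<close>)
  have "inj_on (rotate i) {xs \<in> ?P. arc xs d i \<in> A}"
    using bij_betw_imp_inj_on[OF bij] by (rule inj_on_subset) blast
  from card_image[OF this] img show ?thesis by simp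
qed

lemma card_permutations_first_arc:
  assumes "finite X" "A \<subseteq> ksubsets X d"
  shows "card {xs \<in> permutations_of_set X. arc xs d 0 \<in> A} = card A * (fact d * fact (card X - d))"
proof -
  let ?P = "permutations_of_set X"
  have "finite A" using assms finite_ksubsets finite_subset by blast
  have "{xs \<in> ?P. arc xs d 0 \<in> A} = (\<Union>F\<in>A. {xs \<in> ?P. set (take d xs) = F})"
    by (auto simp: arc_def)
  also have "card \<dots> = (\<Sum>F\<in>A. card {xs \<in> ?P. set (take d xs) = F})"
    by (rule card_UN_disjoint) (use \<open>finite A\<close> in auto)
  also have "\<dots> = (\<Sum>F\<in>A. fact d * fact (card X - d))"
    by (intro sum.cong refl card_permutations_with_prefix assms(1))
       (use assms(2) in \<open>auto simp: ksubsets_def\<close>)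
  finally show ?thesis by simp
qed

lemma sum_card_arcs:
  assumes "finite X" "A \<subseteq> ksubsets X d"
  shows "(\<Sum>xs\<in>permutations_of_set X. card {i. i < card X \<and> arc xs d i \<in> A})
           = card X * (card A * (fact d * fact (card X - d)))"
proof -
  let ?P = "permutations_of_set X" and ?n = "card X"
  have "(\<Sum>xs\<in>?P. card {i. i < ?n \<and> arc xs d i \<in> A})
      = (\<Sum>xs\<in>?P. \<Sum>i<?n. of_bool (arc xs d i \<in> A))"
    by (simp only: card_Collect_less_eq_sum_of_bool)
  also have "\<dots> = (\<Sum>i<?n. \<Sum>xs\<in>?P. of_bool (arc xs d i \<in> A))"
    by (rule sum.swap)
  also have "\<dots> = (\<Sum>i<?n. card {xs \<in> ?P. arc xs d i \<in> A})"
    by (simp only: card_Collect_eq_sum_of_bool[OF finite_permutations_of_set])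
  also have "\<dots> = (\<Sum>i<?n. card {xs \<in> ?P. arc xs d 0 \<in> A})"
    by (intro sum.cong refl card_permutations_arc_in)
  finally show ?thesis using card_permutations_first_arc[OF assms] by simp
qed

text \<open>Katona's double count: each of the \<open>n!\<close> cyclic orders carries at most \<open>d\<close> arcs of \<open>A\<close>,
  and each member of \<open>A\<close> is an arc of exactly \<open>n \<cdot> d! (n - d)!\<close> of them.\<close>

lemma sum_card_arcs_mult_binomial:
  assumes "finite X" "card X = n" "1 \<le> d" "d \<le> n" "A \<subseteq> ksubsets X d"
  shows "(\<Sum>xs\<in>permutations_of_set X. card {i. i < n \<and> arc xs d i \<in> A}) * (n - 1 choose (d - 1))
           = card A * (d * fact n)"
proof -
  have "n * (n - 1 choose (d - 1)) = (n choose d) * d"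
    using Suc_times_binomial_eq[of "n - 1" "d - 1"] assms(3,4) by simp
  moreover have "fact d * fact (n - d) * (n choose d) = (fact n :: nat)"
    using binomial_fact_lemma[OF assms(4)] by simp
  ultimately have "n * (fact d * fact (n - d)) * (n - 1 choose (d - 1)) = d * (fact n :: nat)"
    by (metis mult.assoc mult.commute)
  then show ?thesis using sum_card_arcs[OF assms(1,5)] assms(2) by (simp add: ac_simps)
qed

lemma card_arcs_of_permutation_le:
  assumes "xs \<in> permutations_of_set X" "card X = n" "1 \<le> d" "2 * d \<le> n" "intersecting A"
  shows "card {i. i < n \<and> arc xs d i \<in> A} \<le> d"
  using assms by (intro card_arcs_in_intersecting_le)
    (auto simp: permutations_of_set_def length_finite_permutations_of_set)

theorem erdos_ko_rado:
  assumes "finite X" "card X = n" "1 \<le> d" "2 * d \<le> n" "A \<subseteq> ksubsets X d" "intersecting A"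
  shows "card A \<le> n - 1 choose (d - 1)"
proof -
  let ?S = "\<Sum>xs\<in>permutations_of_set X. card {i. i < n \<and> arc xs d i \<in> A}"
  let ?C = "n - 1 choose (d - 1)"
  have "?S \<le> (\<Sum>xs\<in>permutations_of_set X. d)"
    using card_arcs_of_permutation_le assms by (intro sum_mono) blast
  also have "\<dots> = d * fact n" using assms(1,2) by (simp add: card_permutations_of_set)
  finally have bound: "?S * ?C \<le> d * fact n * ?C" by (rule mult_le_mono1)
  have "card A * (d * fact n) = ?S * ?C"
    using sum_card_arcs_mult_binomial[of X n d A] assms by simp
  also have "\<dots> \<le> d * fact n * ?C" by (rule bound)
  also have "\<dots> = ?C * (d * fact n)" by (rule mult.commute)
  finally show ?thesis by (rule mult_right_le_imp_le) (use assms(3) in simp)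
qed

theorem erdos_ko_rado_strict:
  assumes "finite X" "card X = n" "1 \<le> d" "2 * d \<le> n" "A \<subseteq> ksubsets X d" "intersecting A"
    and "xs \<in> permutations_of_set X" "card {i. i < n \<and> arc xs d i \<in> A} < d"
  shows "card A < n - 1 choose (d - 1)"
proof -
  let ?S = "\<Sum>xs\<in>permutations_of_set X. card {i. i < n \<and> arc xs d i \<in> A}"
  let ?C = "n - 1 choose (d - 1)"
  have "?S < (\<Sum>xs\<in>permutations_of_set X. d)"
    using card_arcs_of_permutation_le assms
    by (intro sum_strict_mono_ex1 finite_permutations_of_set) blast+
  also have "\<dots> = d * fact n" using assms(1,2) by (simp add: card_permutations_of_set)
  finally have bound: "?S * ?C < d * fact n * ?C"
    by (rule mult_less_mono1) (use assms(3,4) in simp)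
  have "card A * (d * fact n) = ?S * ?C"
    using sum_card_arcs_mult_binomial[of X n d A] assms by simp
  also have "\<dots> < d * fact n * ?C" by (rule bound)
  also have "\<dots> = ?C * (d * fact n)" by (rule mult.commute)
  finally show ?thesis by (rule mult_right_less_imp_less) simp
qed

section \<open>The extremal case of the Erd\H{o}s--Ko--Rado theorem\<close>

definition exchange_closed :: "'a set \<Rightarrow> nat \<Rightarrow> 'a set set \<Rightarrow> bool" where
  "exchange_closed X d A \<longleftrightarrow>
     (\<forall>F\<in>A. \<forall>x\<in>F. \<forall>y\<in>X - F. \<forall>V. V \<subseteq> X - F - {y} \<and> card V = d - 1 \<longrightarrow>
        insert y (F - {x}) \<in> A \<or> insert x V \<in> A)"

lemma permutation_with_exchange_arcs:
  assumes X: "finite X" "card X = n" and d: "1 \<le> d" "2 * d \<le> n"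
    and F: "F \<subseteq> X" "card F = d" "x \<in> F" "y \<in> X - F"
    and V: "V \<subseteq> X - F - {y}" "card V = d - 1"
  obtains xs where "xs \<in> permutations_of_set X" "arc xs d 0 = F"
    "arc xs d 1 = insert y (F - {x})" "arc xs d (1 + (n - d)) = insert x V"
proof -
  have finF: "finite F" using F(1) X finite_subset by blast
  obtain fl where fl: "distinct fl" "set fl = F - {x}"
    using finite_distinct_list finF by (metis finite_Diff)
  obtain vl where vl: "distinct vl" "set vl = V"
    using finite_distinct_list X V by (metis finite_Diff finite_subset)
  obtain rl where rl: "distinct rl" "set rl = X - F - {y} - V"
    using finite_distinct_list X by (metis finite_Diff)
  have lfl: "length fl = d - 1" using distinct_card[OF fl(1)] fl(2) F finF by simp
  have lvl: "length vl = d - 1" using distinct_card[OF vl(1)] vl(2) V by simp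
  have "card (X - F) = n - d" using F X finF by (simp add: card_Diff_subset)
  then have "card (X - F - {y}) = n - d - 1" using F(4) X by (simp add: card_Diff_singleton)
  moreover have "finite V" using V X finite_subset by blast
  ultimately have "card (X - F - {y} - V) = n - 2 * d" using V d by (simp add: card_Diff_subset)
  then have lrl: "length rl = n - 2 * d" using distinct_card[OF rl(1)] rl(2) by simp
  define xs where "xs = x # fl @ y # rl @ vl"
  have "distinct xs" "set xs = X"
    using fl vl rl F V by (auto simp: xs_def)
  then have "xs \<in> permutations_of_set X" by (simp add: permutations_of_set_def)
  moreover have "take d xs = x # fl" using lfl d by (cases d) (simp_all add: xs_def)
  then have "arc xs d 0 = F" using fl F(3) by (auto simp: arc_def)
  moreover have "take d (rotate 1 xs) = fl @ [y]" using lfl d by (simp add: xs_def)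
  then have "arc xs d 1 = insert y (F - {x})" using fl by (auto simp: arc_def)
  moreover have "1 + (n - d) = length (x # fl @ y # rl)" using lfl lrl d by simp
  then have "rotate (1 + (n - d)) xs = vl @ x # fl @ y # rl"
    unfolding xs_def by (metis append_Cons append_assoc rotate_append)
  then have "take d (rotate (1 + (n - d)) xs) = vl @ [x]" using lvl d by simp
  then have "arc xs d (1 + (n - d)) = insert x V" using vl by (auto simp: arc_def)
  ultimately show ?thesis using that by blast
qed

text \<open>If both exchanges fail, the cyclic order \<open>x, F - {x}, y, \<dots>, V\<close> of the previous lemma
  has its arc \<open>F\<close> in \<open>A\<close> but neither of the arcs \<open>F - {x} + y\<close> and \<open>V + x\<close>, so Katona's count
  for it is below \<open>d\<close> and the Erd\H{o}s--Ko--Rado bound becomes strict.\<close>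

lemma large_intersecting_exchange_closed:
  assumes X: "finite X" "card X = n" and d: "2 \<le> d" "2 * d \<le> n"
    and A: "A \<subseteq> ksubsets X d" "intersecting A" "n - 1 choose (d - 1) \<le> card A"
  shows "exchange_closed X d A"
  unfolding exchange_closed_def
proof (intro ballI allI impI)
  fix F x y V
  assume F: "F \<in> A" "x \<in> F" "y \<in> X - F" and V: "V \<subseteq> X - F - {y} \<and> card V = d - 1"
  show "insert y (F - {x}) \<in> A \<or> insert x V \<in> A"
  proof (rule ccontr)
    assume out: "\<not> (insert y (F - {x}) \<in> A \<or> insert x V \<in> A)"
    have "F \<subseteq> X" "card F = d" using F(1) A(1) by (auto simp: ksubsets_def)
    then obtain xs where xs: "xs \<in> permutations_of_set X" "arc xs d 0 = F"
      "arc xs d 1 = insert y (F - {x})" "arc xs d (1 + (n - d)) = insert x V"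
      using permutation_with_exchange_arcs[OF X _ d(2) _ _ F(2,3)] V d(1) by auto
    then have "distinct xs" "length xs = n"
      using X(2) by (auto simp: permutations_of_set_def length_finite_permutations_of_set)
    then have "card {i. i < n \<and> arc xs d i \<in> A} < d"
      using card_arcs_in_intersecting_less[OF _ _ d A(2)] xs(2-4) F(1) out by simp
    then have "card A < n - 1 choose (d - 1)"
      using erdos_ko_rado_strict[OF X _ d(2) A(1,2) xs(1)] d(1) by simp
    then show False using A(3) by simp
  qed
qed

lemma exchange_closed_insert:
  assumes X: "finite X" "card X = n" and d: "1 \<le> d" "2 * d + 1 \<le> n"
    and A: "intersecting A" "exchange_closed X d A"
    and B: "B \<subseteq> X" "card B = d - 1"
    and vz: "v \<in> X - B" "z \<in> X - B" "v \<noteq> z" "insert v B \<in> A" "insert z B \<in> A"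
    and w: "w \<in> X - B - {v, z}"
  shows "insert w B \<in> A"
proof -
  have finB: "finite B" using B X finite_subset by blast
  have "card (insert v B) = d" using vz(1) B finB d(1) by simp
  then have "card (X - insert v B) = n - d" using vz(1) B X by (simp add: card_Diff_subset finB)
  moreover have "w \<in> X - insert v B" "z \<in> X - insert v B - {w}" using vz w by auto
  ultimately have "card (X - insert v B - {w} - {z}) = n - d - 2" using X by (simp add: card_Diff_singleton)
  then have "d - 1 \<le> card (X - insert v B - {w} - {z})" using d by simp
  then obtain V where V: "V \<subseteq> X - insert v B - {w} - {z}" "card V = d - 1"
    by (meson obtain_subset_with_card_n)
  have "insert v V \<inter> insert z B = {}" using V vz by auto
  then have "insert v V \<notin> A" using A(1) vz(5) unfolding intersecting_def by blast
  moreover have "insert w (insert v B - {v}) \<in> A \<or> insert v V \<in> A"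
    using A(2) vz(4) V w unfolding exchange_closed_def by blast
  moreover have "insert v B - {v} = B" using vz(1) by auto
  ultimately show ?thesis by simp
qed

text \<open>Induction on the number of points of \<open>H\<close> outside \<open>W \<union> {a}\<close>: such a point \<open>w\<close> is
  exchanged against two different points of \<open>W - H\<close>, and \<open>H\<close> is recovered from the two
  resulting members by the previous lemma.\<close>

lemma exchange_closed_star_from_base:
  assumes X: "finite X" "card X = n" and d: "2 \<le> d" "2 * d + 1 \<le> n"
    and A: "intersecting A" "exchange_closed X d A"
    and W: "W \<subseteq> X" "a \<notin> W" "card W = n - d - 1"
    and base: "\<And>V. V \<subseteq> W \<Longrightarrow> card V = d - 1 \<Longrightarrow> insert a V \<in> A"
    and H: "H \<in> ksubsets X d" "a \<in> H"
  shows "H \<in> A"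
proof -
  have "H \<in> A" if "H \<in> ksubsets X d" "a \<in> H" "card (H - insert a W) \<le> j" for H j
    using that
  proof (induction j arbitrary: H)
    case 0
    have H: "card H = d" "finite H" using "0.prems"(1) X finite_subset by (auto simp: ksubsets_def)
    then have "H - insert a W = {}" using "0.prems"(3) by simp
    then have "H - {a} \<subseteq> W" by blast
    moreover have "card (H - {a}) = d - 1" using H "0.prems"(2) by simp
    ultimately show ?case using base "0.prems"(2) by (metis insert_Diff)
  next
    case (Suc j)
    have H: "H \<subseteq> X" "card H = d" "finite H" using Suc.prems(1) X finite_subset
      by (auto simp: ksubsets_def)
    show ?case
    proof (cases "card (H - insert a W) \<le> j")
      case True
      then show ?thesis using Suc by blast
    next
      case False
      then have cH: "card (H - insert a W) = Suc j" using Suc.prems(3) by simp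
      then have "H - insert a W \<noteq> {}" by (metis card.empty nat.distinct(1))
      then obtain w where w: "w \<in> H - insert a W" by blast
      have "W \<inter> H \<subseteq> H - {a, w}" using w W(2) by auto
      then have "card (W \<inter> H) \<le> d - 2"
        using card_mono[of "H - {a, w}" "W \<inter> H"] H w Suc.prems(2) by (auto simp: card_Diff_subset)
      moreover have "card (W - H) = card W - card (W \<inter> H)"
        using W(1) X(1) finite_subset by (metis card_Diff_subset_Int finite_Int)
      ultimately have "2 \<le> card (W - H)" using W(3) d by linarith
      then obtain v z where vz: "v \<in> W - H" "z \<in> W - H" "v \<noteq> z"
        by (metis card_2_iff obtain_subset_with_card_n insert_subset)
      have IH: "insert q (H - {w}) \<in> A" if "q \<in> W - H" for q
      proof (rule Suc.IH)
        have "insert q (H - {w}) - insert a W = (H - insert a W) - {w}" using that by auto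
        then show "card (insert q (H - {w}) - insert a W) \<le> j" using cH w H(3) by simp
        show "insert q (H - {w}) \<in> ksubsets X d"
          using that w H d W(1) by (auto simp: ksubsets_def)
        show "a \<in> insert q (H - {w})" using w Suc.prems(2) by auto
      qed
      have "insert w (H - {w}) \<in> A"
      proof (rule exchange_closed_insert[OF X _ d(2) A])
        show "H - {w} \<subseteq> X" "card (H - {w}) = d - 1" using H w by auto
        show "v \<in> X - (H - {w})" "z \<in> X - (H - {w})" using vz W(1) by auto
        show "insert v (H - {w}) \<in> A" "insert z (H - {w}) \<in> A" using IH vz by auto
        show "w \<in> X - (H - {w}) - {v, z}" using w vz H by auto
      qed (use d vz in auto)
      then show ?thesis using w by (simp add: insert_absorb)
    qed
  qed
  then show ?thesis using H by blast
qed

lemma exchange_closed_contains_star: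
  assumes X: "finite X" "card X = n" and d: "2 \<le> d" "2 * d + 1 \<le> n"
    and A: "A \<subseteq> ksubsets X d" "intersecting A" "exchange_closed X d A"
    and G: "G \<in> A" "a \<in> G" "u \<in> X - G" "insert u (G - {a}) \<notin> A"
  shows "{D \<in> ksubsets X d. a \<in> D} \<subseteq> A"
proof
  fix D assume D: "D \<in> {D \<in> ksubsets X d. a \<in> D}"
  have GX: "G \<subseteq> X" "card G = d" using G(1) A(1) by (auto simp: ksubsets_def)
  have "card (X - G) = n - d" using GX X finite_subset by (metis card_Diff_subset)
  then have "card (X - G - {u}) = n - d - 1" using G(3) X by (simp add: card_Diff_singleton)
  moreover have "insert a V \<in> A" if "V \<subseteq> X - G - {u}" "card V = d - 1" for V
    using A(3) G that unfolding exchange_closed_def by blast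
  ultimately show "D \<in> A"
    using exchange_closed_star_from_base[OF X d A(2,3), of "X - G - {u}" a D] G(2) D by blast
qed

lemma exchange_leaving_family:
  assumes "finite X" "F \<in> A" "D \<notin> A" "F \<subseteq> X" "D \<subseteq> X" "card F = card D"
  shows "\<exists>G\<in>A. \<exists>x\<in>G. \<exists>y\<in>X - G. insert y (G - {x}) \<notin> A"
  using assms
proof (induction "card (F - D)" arbitrary: F)
  case 0
  then have "F \<subseteq> D" using finite_subset by (metis Diff_eq_empty_iff card_0_eq finite_Diff)
  then have "F = D" using 0 card_subset_eq finite_subset by metis
  then show ?case using 0 by simp
next
  case (Suc k)
  have fin: "finite F" "finite D" using Suc.prems finite_subset by blast+
  obtain x where x: "x \<in> F - D" using Suc.hyps(2) by (metis card.empty ex_in_conv nat.distinct(1))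
  have "card (D - F) = card (F - D)"
    using fin Suc.prems(6) by (simp add: card_Diff_subset_Int Int_commute)
  then obtain y where y: "y \<in> D - F" using Suc.hyps(2) by (metis card.empty ex_in_conv nat.distinct(1))
  show ?case
  proof (cases "insert y (F - {x}) \<in> A")
    case False
    then show ?thesis using Suc.prems x y by blast
  next
    case True
    have "insert y (F - {x}) - D = (F - D) - {x}" using x y by auto
    then have "k = card (insert y (F - {x}) - D)" using Suc.hyps(2) x fin by simp
    moreover have "card D > 0" using y fin(2) card_gt_0_iff by blast
    then have "card (insert y (F - {x})) = card D"
      using Suc.prems(6) x y fin by (simp add: card_insert_if)
    ultimately show ?thesis using Suc.hyps(1) Suc.prems x y True by blast
  qed
qed

theorem erdos_ko_rado_extremal_contains_star:
  assumes X: "finite X" "card X = n" and d: "1 \<le> d" "2 * d + 1 \<le> n"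
    and A: "A \<subseteq> ksubsets X d" "intersecting A" "n - 1 choose (d - 1) \<le> card A"
  shows "\<exists>t\<in>X. {D \<in> ksubsets X d. t \<in> D} \<subseteq> A"
proof -
  have "A \<noteq> {}" using A(3) d by auto
  then obtain F where F: "F \<in> A" by blast
  then have FX: "F \<subseteq> X" "card F = d" using A(1) by (auto simp: ksubsets_def)
  show ?thesis
  proof (cases "d = 1")
    case True
    then obtain t where "F = {t}" using FX card_1_singletonE by metis
    then have "{D \<in> ksubsets X d. t \<in> D} \<subseteq> A" using F True
      by (auto simp: ksubsets_def card_1_singleton_iff)
    then show ?thesis using \<open>F = {t}\<close> FX by blast
  next
    case False
    have "card (X - F) = n - d" using FX X by (metis card_Diff_subset finite_subset)
    then have "d \<le> card (X - F)" using d by simp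
    then obtain D where D: "D \<subseteq> X - F" "card D = d" by (meson obtain_subset_with_card_n)
    then have "D \<inter> F = {}" "D \<noteq> {}" using d by auto
    then have "D \<notin> A" using A(2) F unfolding intersecting_def by blast
    moreover have "D \<subseteq> X" "card F = card D" using D FX by auto
    ultimately obtain G a u where G: "G \<in> A" "a \<in> G" "u \<in> X - G" "insert u (G - {a}) \<notin> A"
      using exchange_leaving_family[OF X(1) F _ FX(1)] by blast
    have "exchange_closed X d A"
      by (rule large_intersecting_exchange_closed[OF X _ _ A]) (use False d in auto)
    then have "{D \<in> ksubsets X d. a \<in> D} \<subseteq> A"
      using exchange_closed_contains_star[OF X _ d(2) A(1,2) _ G] False d by simp
    moreover have "a \<in> X" using G A(1) by (auto simp: ksubsets_def)
    ultimately show ?thesis by blast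
  qed
qed

section \<open>Intersecting families with two trace sizes\<close>

lemma subset_atLeastAtMost_split:
  fixes G :: "nat set"
  assumes "G \<subseteq> {1..m}" "n \<le> m"
  shows "G = G \<inter> {1..n} \<union> G \<inter> {n+1..m}"
    and "card G = card (G \<inter> {1..n}) + card (G \<inter> {n+1..m})"
proof -
  show split: "G = G \<inter> {1..n} \<union> G \<inter> {n+1..m}" using assms by auto
  have "finite G" using assms(1) finite_subset by blast
  then have "card (G \<inter> {1..n} \<union> G \<inter> {n+1..m}) = card (G \<inter> {1..n}) + card (G \<inter> {n+1..m})"
    by (intro card_Un_disjoint) auto
  then show "card G = card (G \<inter> {1..n}) + card (G \<inter> {n+1..m})" using split by simp
qed

lemma admissibleD:
  assumes "G \<in> admissible m n k c d"
  shows "G \<subseteq> {1..m}" "card G = k" "card (G \<inter> {1..n}) = c \<or> card (G \<inter> {1..n}) = d"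
  using assms unfolding admissible_def ksubsets_def by auto

lemma finite_admissible: "finite (admissible m n k c d)"
proof -
  have "admissible m n k c d \<subseteq> Pow {1..m}" unfolding admissible_def ksubsets_def by auto
  then show ?thesis by (rule finite_subset) simp
qed

definition star_layer :: "nat \<Rightarrow> nat \<Rightarrow> nat \<Rightarrow> nat \<Rightarrow> nat \<Rightarrow> nat set set" where
  "star_layer m n k e t =
     {A \<union> B \<union> {t} | A B. A \<in> ksubsets ({1..n} - {t}) (e - 1) \<and> B \<in> ksubsets {n+1..m} (k - e)}"

lemma star_layer_eq_image:
  "star_layer m n k e t = (\<lambda>(A, B). A \<union> B \<union> {t}) `
     (ksubsets ({1..n} - {t}) (e - 1) \<times> ksubsets {n+1..m} (k - e))"
  unfolding star_layer_def by auto

lemma mem_star_layer_iff: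
  assumes "t \<in> {1..n}" "1 \<le> e" "e \<le> k" "n \<le> m"
  shows "G \<in> star_layer m n k e t \<longleftrightarrow>
           G \<subseteq> {1..m} \<and> t \<in> G \<and> card G = k \<and> card (G \<inter> {1..n}) = e"
proof
  assume "G \<in> star_layer m n k e t"
  then obtain A B where AB: "G = A \<union> B \<union> {t}" "A \<subseteq> {1..n} - {t}" "card A = e - 1"
    "B \<subseteq> {n+1..m}" "card B = k - e"
    unfolding star_layer_def ksubsets_def by blast
  have fin: "finite A" "finite B" using AB(2,4) by (auto intro: finite_subset)
  have G: "G \<subseteq> {1..m}" using AB assms by auto
  have "G \<inter> {1..n} = insert t A" "G \<inter> {n+1..m} = B" using AB assms(1) by auto
  moreover have "t \<notin> A" using AB(2) by blast
  ultimately have "card (G \<inter> {1..n}) = e" "card (G \<inter> {n+1..m}) = k - e"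
    using fin AB(3,5) assms(2) by auto
  then show "G \<subseteq> {1..m} \<and> t \<in> G \<and> card G = k \<and> card (G \<inter> {1..n}) = e"
    using subset_atLeastAtMost_split(2)[OF G assms(4)] G AB(1) assms(3) by auto
next
  assume G: "G \<subseteq> {1..m} \<and> t \<in> G \<and> card G = k \<and> card (G \<inter> {1..n}) = e"
  let ?A = "G \<inter> {1..n} - {t}" and ?B = "G \<inter> {n+1..m}"
  have "G = ?A \<union> ?B \<union> {t}" using subset_atLeastAtMost_split(1)[of G m n] G assms(1,4) by auto
  moreover have "?A \<in> ksubsets ({1..n} - {t}) (e - 1)" using G assms(1) by (auto simp: ksubsets_def)
  moreover have "?B \<in> ksubsets {n+1..m} (k - e)"
    using subset_atLeastAtMost_split(2)[of G m n] G assms(4) by (auto simp: ksubsets_def)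
  ultimately show "G \<in> star_layer m n k e t" unfolding star_layer_def by blast
qed

lemma card_star_layer:
  assumes "t \<in> {1..n}" "n \<le> m"
  shows "card (star_layer m n k e t) = (n - 1 choose (e - 1)) * (m - n choose (k - e))"
proof -
  let ?D = "ksubsets ({1..n} - {t}) (e - 1) \<times> ksubsets {n+1..m} (k - e)"
  have "inj_on (\<lambda>(A, B). A \<union> B \<union> {t}) ?D"
  proof (rule inj_onI)
    fix p q assume pq: "p \<in> ?D" "q \<in> ?D"
      and eq: "(\<lambda>(A, B). A \<union> B \<union> {t}) p = (\<lambda>(A, B). A \<union> B \<union> {t}) q"
    obtain A B A' B' where p: "p = (A, B)" and q: "q = (A', B')" by (cases p, cases q)
    have "A \<subseteq> {1..n} - {t}" "A' \<subseteq> {1..n} - {t}" "B \<subseteq> {n+1..m}" "B' \<subseteq> {n+1..m}"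
      using pq p q by (auto simp: ksubsets_def)
    then have "A = (A \<union> B \<union> {t}) \<inter> ({1..n} - {t}) \<and> A' = (A' \<union> B' \<union> {t}) \<inter> ({1..n} - {t})
        \<and> B = (A \<union> B \<union> {t}) \<inter> {n+1..m} \<and> B' = (A' \<union> B' \<union> {t}) \<inter> {n+1..m}"
      using assms(1) by auto
    then show "p = q" using eq p q by (metis case_prod_conv)
  qed
  then have "card (star_layer m n k e t) = card ?D"
    unfolding star_layer_eq_image by (rule card_image)
  also have "\<dots> = (n - 1 choose (e - 1)) * (m - n choose (k - e))"
    using assms by (simp add: card_cartesian_product card_ksubsets)
  finally show ?thesis .
qed

lemma star_layers_subset_admissible:
  assumes "t \<in> {1..n}" "n \<le> m" "1 \<le> d" "d < c" "c < k"
  shows "star_layer m n k c t \<union> star_layer m n k d t \<subseteq> admissible m n k c d"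
proof
  fix G assume "G \<in> star_layer m n k c t \<union> star_layer m n k d t"
  then have "G \<subseteq> {1..m} \<and> card G = k \<and> (card (G \<inter> {1..n}) = c \<or> card (G \<inter> {1..n}) = d)"
    using mem_star_layer_iff[of t n c k m G] mem_star_layer_iff[of t n d k m G] assms by auto
  then show "G \<in> admissible m n k c d" by (simp add: admissible_def ksubsets_def)
qed

lemma intersecting_star_layers:
  assumes "t \<in> {1..n}" "n \<le> m" "1 \<le> d" "d < c" "c < k"
  shows "intersecting (star_layer m n k c t \<union> star_layer m n k d t)"
  using assms unfolding intersecting_def by (auto simp: mem_star_layer_iff)

lemma card_star_layers:
  assumes "t \<in> {1..n}" "n \<le> m" "1 \<le> d" "d < c" "c < k"
  shows "card (star_layer m n k c t \<union> star_layer m n k d t)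
           = (n - 1 choose (c - 1)) * (m - n choose (k - c)) + (n - 1 choose (d - 1)) * (m - n choose (k - d))"
proof -
  have "finite (star_layer m n k e t)" for e
    unfolding star_layer_eq_image by (intro finite_imageI finite_cartesian_product finite_ksubsets) auto
  moreover have "star_layer m n k c t \<inter> star_layer m n k d t = {}"
    using assms by (auto simp: mem_star_layer_iff)
  ultimately show ?thesis using card_Un_disjoint card_star_layer[OF assms(1,2)] by metis
qed

definition trace_class :: "nat \<Rightarrow> nat set set \<Rightarrow> nat set \<Rightarrow> nat set set" where
  "trace_class n F D = {G \<in> F. G \<inter> {1..n} = D}"

text \<open>Members with a common trace \<open>D\<close> are determined by their parts in \<open>[n+1, m]\<close>, each of which
  must meet the part of a fixed member disjoint from \<open>D\<close>.\<close>

lemma card_trace_class_le: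
  assumes nm: "n \<le> m" and F: "F \<subseteq> admissible m n k c d" "intersecting F" and "d \<le> c"
    and D: "card D = d" and G': "G' \<in> F" "G' \<inter> D = {}"
  shows "card (trace_class n F D) \<le> (k - d) * (m - n - 1 choose (k - d - 1))"
proof -
  let ?Y = "{n+1..m}" and ?B' = "G' \<inter> {n+1..m}"
  let ?P = "m - n - 1 choose (k - d - 1)"
  let ?through = "\<lambda>y. {B \<in> ksubsets ?Y (k - d). y \<in> B}"
  have "G' \<in> admissible m n k c d" using G'(1) F(1) by blast
  then have "G' \<subseteq> {1..m}" "card G' = k" "d \<le> card (G' \<inter> {1..n})"
    using admissibleD \<open>d \<le> c\<close> by (blast, blast, fastforce)
  then have "card ?B' \<le> k - d" using subset_atLeastAtMost_split(2)[OF _ nm] by fastforce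
  have parts: "G = D \<union> G \<inter> ?Y" "card G = card D + card (G \<inter> ?Y)"
    if "G \<in> trace_class n F D" for G
  proof -
    have "G \<in> F" "G \<inter> {1..n} = D" using that by (auto simp: trace_class_def)
    moreover from this have "G \<subseteq> {1..m}" using F(1) admissibleD(1) by blast
    ultimately show "G = D \<union> G \<inter> ?Y" "card G = card D + card (G \<inter> ?Y)"
      using subset_atLeastAtMost_split[OF _ nm] by metis+
  qed
  have inj: "inj_on (\<lambda>G. G \<inter> ?Y) (trace_class n F D)"
    by (rule inj_onI) (metis parts(1))
  have "(\<lambda>G. G \<inter> ?Y) ` trace_class n F D \<subseteq> (\<Union>y\<in>?B'. ?through y)"
  proof
    fix B assume "B \<in> (\<lambda>G. G \<inter> ?Y) ` trace_class n F D"
    then obtain G where G: "G \<in> trace_class n F D" "B = G \<inter> ?Y" by blast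
    then have "G \<in> F" "G \<inter> {1..n} = D" by (auto simp: trace_class_def)
    have "card G = k" using \<open>G \<in> F\<close> F(1) admissibleD(2) by blast
    then have "card B = k - d" using parts(2)[OF G(1)] G(2) D by simp
    obtain z where "z \<in> G" "z \<in> G'" using F(2) \<open>G \<in> F\<close> G'(1) unfolding intersecting_def by blast
    moreover from this have "z \<notin> {1..n}" using \<open>G \<inter> {1..n} = D\<close> G'(2) by auto
    moreover have "z \<in> {1..m}" using \<open>z \<in> G'\<close> \<open>G' \<subseteq> {1..m}\<close> by blast
    ultimately have "z \<in> ?B'" "z \<in> B" using G(2) by auto
    then show "B \<in> (\<Union>y\<in>?B'. ?through y)" using \<open>card B = k - d\<close> G(2) by (auto simp: ksubsets_def)
  qed
  then have "card ((\<lambda>G. G \<inter> ?Y) ` trace_class n F D) \<le> card (\<Union>y\<in>?B'. ?through y)"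
    by (rule card_mono[rotated]) (simp add: finite_ksubsets)
  then have "card (trace_class n F D) \<le> card (\<Union>y\<in>?B'. ?through y)"
    unfolding card_image[OF inj] .
  also have "\<dots> \<le> (\<Sum>y\<in>?B'. card (?through y))" by (rule card_UN_le) simp
  also have "\<dots> \<le> (\<Sum>y\<in>?B'. ?P)"
    by (intro sum_mono) (use card_ksubsets_containing_le[of ?Y _ "k - d"] in auto)
  also have "\<dots> \<le> (k - d) * ?P" using \<open>card ?B' \<le> k - d\<close> by simp
  finally show ?thesis .
qed

definition heavy_traces :: "nat \<Rightarrow> nat \<Rightarrow> nat \<Rightarrow> nat set set \<Rightarrow> nat set set" where
  "heavy_traces n d L F = {D \<in> ksubsets {1..n} d. L < card (trace_class n F D)}"

text \<open>Members with \<open>c\<close> points in \<open>[n]\<close> are counted crudely, members whose \<open>d\<close>-trace is heavy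
  by their part in \<open>[n+1, m]\<close>, and the light trace classes have at most \<open>L\<close> members each.\<close>

lemma card_le_by_traces:
  assumes nm: "n \<le> m" and F: "F \<subseteq> admissible m n k c d"
  shows "card F \<le> (n choose c) * (m - n choose (k - c))
                  + card (heavy_traces n d L F) * (m - n choose (k - d)) + (n choose d) * L"
proof -
  let ?X = "{1..n}" and ?Y = "{n+1..m}" and ?H = "heavy_traces n d L F"
  define Fc where "Fc = (\<Union>C\<in>ksubsets ?X c. (\<lambda>B. C \<union> B) ` ksubsets ?Y (k - c))"
  define Fh where "Fh = (\<Union>D\<in>?H. (\<lambda>B. D \<union> B) ` ksubsets ?Y (k - d))"
  define Fl where "Fl = (\<Union>D\<in>ksubsets ?X d - ?H. trace_class n F D)"
  have subH: "?H \<subseteq> ksubsets ?X d" unfolding heavy_traces_def by blast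
  have finH: "finite ?H" by (rule finite_subset[OF subH finite_ksubsets]) simp
  have "F \<subseteq> Fc \<union> Fh \<union> Fl"
  proof
    fix G assume "G \<in> F"
    then have "G \<in> admissible m n k c d" using F by blast
    note G = admissibleD[OF this]
    note split = subset_atLeastAtMost_split[OF G(1) nm]
    consider "card (G \<inter> ?X) = c" | "card (G \<inter> ?X) = d" "G \<inter> ?X \<in> ?H"
      | "card (G \<inter> ?X) = d" "G \<inter> ?X \<notin> ?H" using G(3) by blast
    then show "G \<in> Fc \<union> Fh \<union> Fl"
    proof cases
      case 1
      then have "G \<inter> ?X \<in> ksubsets ?X c" "G \<inter> ?Y \<in> ksubsets ?Y (k - c)"
        using split(2) G(2) by (auto simp: ksubsets_def)
      then show ?thesis unfolding Fc_def using split(1) by blast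
    next
      case 2
      then have "G \<inter> ?Y \<in> ksubsets ?Y (k - d)" using split(2) G(2) by (auto simp: ksubsets_def)
      then show ?thesis unfolding Fh_def using 2 split(1) by blast
    next
      case 3
      then have "G \<inter> ?X \<in> ksubsets ?X d - ?H" by (auto simp: ksubsets_def)
      then show ?thesis unfolding Fl_def trace_class_def using \<open>G \<in> F\<close> by blast
    qed
  qed
  moreover have "finite Fc" "finite Fh"
    unfolding Fc_def Fh_def using finH by (simp_all add: finite_ksubsets)
  moreover have "finite Fl"
    unfolding Fl_def trace_class_def using finite_subset[OF F finite_admissible]
    by (intro finite_UN_I) (simp_all add: finite_ksubsets)
  ultimately have "card F \<le> card (Fc \<union> Fh \<union> Fl)" by (intro card_mono) simp_all
  also have "\<dots> \<le> card Fc + card Fh + card Fl"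
    using card_Un_le[of "Fc \<union> Fh" Fl] card_Un_le[of Fc Fh] by simp
  finally have "card F \<le> card Fc + card Fh + card Fl" .
  moreover have "card Fc \<le> card (ksubsets ?X c) * (m - n choose (k - c))"
    unfolding Fc_def using card_image_ksubsets_le[of ?Y]
    by (intro card_UN_le_mult) (simp_all add: finite_ksubsets)
  moreover have "card Fh \<le> card ?H * (m - n choose (k - d))"
    unfolding Fh_def using card_image_ksubsets_le[of ?Y] by (intro card_UN_le_mult finH) simp
  moreover have "card Fl \<le> (n choose d) * L"
  proof -
    have "card Fl \<le> card (ksubsets ?X d - ?H) * L"
      unfolding Fl_def by (rule card_UN_le_mult) (auto simp: heavy_traces_def finite_ksubsets)
    also have "\<dots> \<le> card (ksubsets ?X d) * L"
      by (intro mult_le_mono1 card_mono) (simp_all add: finite_ksubsets)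
    also have "\<dots> = (n choose d) * L" by (simp add: card_ksubsets)
    finally show ?thesis .
  qed
  ultimately show ?thesis by (simp add: card_ksubsets)
qed

lemma binomial_dominates:
  fixes N r s K1 K2 :: nat
  assumes "1 \<le> s" "s < r" "2 * r \<le> N" "r * (2 * K1 + K2 * r) < N"
  shows "K1 * (N choose s) + K2 * (r * (N - 1 choose (r - 1))) < N choose r"
proof -
  let ?P = "N - 1 choose (r - 1)"
  have "?P > 0" using assms by simp
  have "r * (N choose r) = N * ?P"
    using Suc_times_binomial_eq[of "N - 1" "r - 1"] assms by (simp add: ac_simps)
  have "N choose s = (N - 1 choose (s - 1)) + (N - 1 choose s)"
    using binomial_Suc_Suc[of "N - 1" "s - 1"] assms by simp
  moreover have "N - 1 choose (s - 1) \<le> ?P" "N - 1 choose s \<le> ?P"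
    by (intro binomial_mono; use assms in auto)+
  ultimately have "N choose s \<le> 2 * ?P" by simp
  then have "r * (K1 * (N choose s) + K2 * (r * ?P)) \<le> r * (K1 * (2 * ?P) + K2 * (r * ?P))"
    by simp
  also have "\<dots> = r * (2 * K1 + K2 * r) * ?P" by (simp add: algebra_simps)
  also have "\<dots> < N * ?P" using assms(4) \<open>?P > 0\<close> by simp
  also have "\<dots> = r * (N choose r)" using \<open>r * (N choose r) = N * ?P\<close> by simp
  finally show ?thesis by simp
qed

lemma intersecting_heavy_traces:
  assumes nm: "n \<le> m" and F: "F \<subseteq> admissible m n k c d" "intersecting F" and "d \<le> c"
  shows "intersecting (heavy_traces n d ((k - d) * (m - n - 1 choose (k - d - 1))) F)"
  unfolding intersecting_def
proof (intro ballI notI)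
  let ?L = "(k - d) * (m - n - 1 choose (k - d - 1))"
  fix D D' assume D: "D \<in> heavy_traces n d ?L F" "D' \<in> heavy_traces n d ?L F" "D \<inter> D' = {}"
  then have "trace_class n F D' \<noteq> {}" by (auto simp: heavy_traces_def)
  then obtain G' where "G' \<in> F" "G' \<inter> {1..n} = D'" by (auto simp: trace_class_def)
  moreover have "D \<subseteq> {1..n}" "card D = d" using D(1) by (auto simp: heavy_traces_def ksubsets_def)
  ultimately have "card (trace_class n F D) \<le> ?L"
    using card_trace_class_le[OF nm F \<open>d \<le> c\<close>] D(3) by blast
  then show False using D(1) by (simp add: heavy_traces_def)
qed

text \<open>A star is a competitor of size \<open>(n - 1 choose (d - 1)) * (m - n choose (k - d))\<close>
  plus lower order terms in \<open>m\<close>, while the members with \<open>c\<close>-traces or light \<open>d\<close>-traces only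
  account for lower order terms.\<close>

lemma card_heavy_traces_ge:
  assumes nm: "n \<le> m" and F: "F \<subseteq> admissible m n k c d" and "d < c" "c < k"
    and N: "2 * (k - d) \<le> m - n" "(k - d) * (2 * (n choose c) + (n choose d) * (k - d)) < m - n"
    and large: "(n - 1 choose (d - 1)) * (m - n choose (k - d)) \<le> card F"
  shows "n - 1 choose (d - 1) \<le> card (heavy_traces n d ((k - d) * (m - n - 1 choose (k - d - 1))) F)"
proof (rule ccontr)
  let ?H = "heavy_traces n d ((k - d) * (m - n - 1 choose (k - d - 1))) F"
  let ?Q = "m - n choose (k - d)"
  let ?rest = "(n choose c) * (m - n choose (k - c)) + (n choose d) * ((k - d) * (m - n - 1 choose (k - d - 1)))"
  assume "\<not> n - 1 choose (d - 1) \<le> card ?H"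
  then have "(card ?H + 1) * ?Q \<le> (n - 1 choose (d - 1)) * ?Q" by (intro mult_le_mono1) simp
  also have "\<dots> \<le> card F" by (rule large)
  also have "\<dots> \<le> card ?H * ?Q + ?rest"
    using card_le_by_traces[OF nm F, of "(k - d) * (m - n - 1 choose (k - d - 1))"] by linarith
  finally have "?Q \<le> ?rest" by simp
  moreover have "?rest < ?Q"
    using binomial_dominates[OF _ _ N] \<open>d < c\<close> \<open>c < k\<close> by (simp add: diff_less_mono2)
  ultimately show False by simp
qed

lemma center_in_members:
  assumes nm: "n \<le> m" and F: "F \<subseteq> admissible m n k c d" "intersecting F"
    and cd: "1 \<le> d" "d \<le> c" "c + d \<le> n"
    and t: "t \<in> {1..n}" "{D \<in> ksubsets {1..n} d. t \<in> D}
                           \<subseteq> heavy_traces n d ((k - d) * (m - n - 1 choose (k - d - 1))) F"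
    and G: "G \<in> F"
  shows "t \<in> G"
proof (rule ccontr)
  let ?X = "{1..n}"
  assume "t \<notin> G"
  have "G \<in> admissible m n k c d" using G F(1) by blast
  then have "card (G \<inter> ?X) \<le> c" using admissibleD(3) cd by fastforce
  moreover have "card (?X - G \<inter> ?X) = n - card (G \<inter> ?X)" by (simp add: card_Diff_subset)
  moreover have "t \<in> ?X - G \<inter> ?X" using t(1) \<open>t \<notin> G\<close> by blast
  then have "card (?X - G \<inter> ?X - {t}) = card (?X - G \<inter> ?X) - 1" by (rule card_Diff_singleton)
  ultimately have "d - 1 \<le> card (?X - G \<inter> ?X - {t})" using cd by linarith
  then obtain R where R: "R \<subseteq> ?X - G \<inter> ?X - {t}" "card R = d - 1"
    by (meson obtain_subset_with_card_n)
  have "finite R" "t \<notin> R" using R(1) by (auto intro: finite_subset)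
  then have "insert t R \<in> {D \<in> ksubsets ?X d. t \<in> D}"
    using R t(1) cd(1) by (auto simp: ksubsets_def)
  then have heavy: "insert t R \<in> heavy_traces n d ((k - d) * (m - n - 1 choose (k - d - 1))) F"
    using t(2) by blast
  have "G \<inter> insert t R = {}" using R \<open>t \<notin> G\<close> by auto
  then have "card (trace_class n F (insert t R)) \<le> (k - d) * (m - n - 1 choose (k - d - 1))"
    using card_trace_class_le[OF nm F cd(2) _ G] heavy by (auto simp: heavy_traces_def ksubsets_def)
  then show False using heavy by (simp add: heavy_traces_def)
qed

lemma max_intersecting_eq_star_layers:
  assumes "k \<le> n" "d < c" "c < k" "c + d = n"
    and m: "n + (k - d) * (2 * (n choose c) + (n choose d) * (k - d)) + 2 * (k - d) < m"
    and "max_intersecting m n k c d F"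
  shows "\<exists>t\<in>{1..n}. F = star_layer m n k c t \<union> star_layer m n k d t"
proof -
  let ?H = "heavy_traces n d ((k - d) * (m - n - 1 choose (k - d - 1))) F"
  have d: "1 \<le> d" "2 * d + 1 \<le> n" and nm: "n \<le> m" using assms by linarith+
  have F: "F \<subseteq> admissible m n k c d" "intersecting F"
    and max: "\<And>G. G \<subseteq> admissible m n k c d \<Longrightarrow> intersecting G \<Longrightarrow> card G \<le> card F"
    using assms(6) unfolding max_intersecting_def by auto
  have star_le: "card (star_layer m n k c t \<union> star_layer m n k d t) \<le> card F" if "t \<in> {1..n}" for t
    by (intro max star_layers_subset_admissible intersecting_star_layers that nm d(1) assms(2,3))
  have "1 \<in> {1..n}" using d by simp
  then have "(n - 1 choose (d - 1)) * (m - n choose (k - d)) \<le> card F"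
    using star_le card_star_layers[OF _ nm d(1) assms(2,3)] by (metis add_leE)
  moreover have "2 * (k - d) \<le> m - n" "(k - d) * (2 * (n choose c) + (n choose d) * (k - d)) < m - n"
    using m by linarith+
  ultimately have "n - 1 choose (d - 1) \<le> card ?H"
    using card_heavy_traces_ge[OF nm F(1) assms(2,3)] by blast
  moreover have "?H \<subseteq> ksubsets {1..n} d" by (auto simp: heavy_traces_def)
  moreover have "intersecting ?H" using intersecting_heavy_traces[OF nm F] assms(2) by simp
  ultimately obtain t where t: "t \<in> {1..n}" "{D \<in> ksubsets {1..n} d. t \<in> D} \<subseteq> ?H"
    using erdos_ko_rado_extremal_contains_star[of "{1..n}" n d ?H] d by auto
  have "F \<subseteq> star_layer m n k c t \<union> star_layer m n k d t"
  proof
    fix G assume "G \<in> F"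
    then have "t \<in> G" using center_in_members[OF nm F _ _ _ t] d(1) assms(2,4) by simp
    moreover have "G \<in> admissible m n k c d" using \<open>G \<in> F\<close> F(1) by blast
    ultimately show "G \<in> star_layer m n k c t \<union> star_layer m n k d t"
      using admissibleD[of G] mem_star_layer_iff[OF t(1)] nm d(1) assms(2,3) by auto
  qed
  moreover have "finite (star_layer m n k c t \<union> star_layer m n k d t)"
    using star_layers_subset_admissible[OF t(1) nm d(1) assms(2,3)] finite_admissible
    by (rule finite_subset)
  ultimately have "F = star_layer m n k c t \<union> star_layer m n k d t"
    using star_le[OF t(1)] by (metis card_seteq)
  then show ?thesis using t(1) by blast
qed

theorem lemma13:
  fixes n k c d :: nat
  assumes "k \<le> n" and "n + 3 < 2 * k" and "d < c" and "c < k" and "c + d = n"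
  shows "\<exists>M. \<forall>m\<ge>M. \<forall>\<F>. max_intersecting m n k c d \<F> \<longrightarrow>
           (\<exists>t\<in>{1..n}. \<F> =
              {A \<union> B \<union> {t} | A B. A \<in> ksubsets ({1..n} - {t}) (c - 1) \<and> B \<in> ksubsets {n+1..m} (k - c)}
            \<union> {A \<union> B \<union> {t} | A B. A \<in> ksubsets ({1..n} - {t}) (d - 1) \<and> B \<in> ksubsets {n+1..m} (k - d)})
           \<and> card \<F> = (n - 1 choose (c - 1)) * (m - n choose (k - c))
                      + (n - 1 choose (d - 1)) * (m - n choose (k - d))"
proof (intro exI allI impI)
  fix m F
  assume "Suc (n + (k - d) * (2 * (n choose c) + (n choose d) * (k - d)) + 2 * (k - d)) \<le> m"
    and "max_intersecting m n k c d F"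
  then obtain t where t: "t \<in> {1..n}" "F = star_layer m n k c t \<union> star_layer m n k d t"
    using max_intersecting_eq_star_layers[OF assms(1,3,4,5)] Suc_le_eq by blast
  have "1 \<le> d" "n \<le> m" using assms \<open>_ \<le> m\<close> by linarith+
  then show "(\<exists>t\<in>{1..n}. F =
              {A \<union> B \<union> {t} | A B. A \<in> ksubsets ({1..n} - {t}) (c - 1) \<and> B \<in> ksubsets {n+1..m} (k - c)}
            \<union> {A \<union> B \<union> {t} | A B. A \<in> ksubsets ({1..n} - {t}) (d - 1) \<and> B \<in> ksubsets {n+1..m} (k - d)})
           \<and> card F = (n - 1 choose (c - 1)) * (m - n choose (k - c))
                      + (n - 1 choose (d - 1)) * (m - n choose (k - d))"
    unfolding star_layer_def[symmetric] using t card_star_layers[OF t(1)] assms(3,4) by auto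
qed

end
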